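(* Let $x_1,x_2,x_3>0$, $\gamma,\delta>0$ with $\gamma\ne1\ne\delta$, and let $$\mathbf{Q}=\begin{pmatrix}1&\delta x_1&x_2&x_3\\ 1/(\delta x_1)&1&x_2/x_1&x_3/x_1\\ 1/x_2&x_1/x_2&1&\gamma x_3/x_2\\ 1/x_3&x_1/x_3&x_2/(\gamma x_3)&1\end{pmatrix}$$ with principal right eigenvector $\mathbf{w}^{EM}$. Then $\delta>1$ iff $w_1^{EM}/w_2^{EM}<\delta x_1$, and $\delta<1$ iff $w_1^{EM}/w_2^{EM}>\delta x_1$.
   Context: The principal right eigenvector is the positive (Perron) eigenvector belonging to the largest eigenvalue. *)

theory Defs
  imports "HOL-Analysis.Analysis"
begin

definition cmat_eigenvalue :: "real^'n^'n \<Rightarrow> complex \<Rightarrow> bool" where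
  "cmat_eigenvalue A \<mu> \<longleftrightarrow>
     (\<exists>v::complex^'n. v \<noteq> 0 \<and> (\<chi> i j. complex_of_real (A$i$j)) *v v = \<mu> *s v)"

definition principal_right_eigenvector :: "real^'n^'n \<Rightarrow> real^'n \<Rightarrow> bool" where
  "principal_right_eigenvector A w \<longleftrightarrow>
     (\<forall>i. w$i > 0) \<and>
     (\<exists>l::real. A *v w = l *s w \<and> (\<forall>\<mu>. cmat_eigenvalue A \<mu> \<longrightarrow> cmod \<mu> \<le> l))"

definition Qmat :: "real \<Rightarrow> real \<Rightarrow> real \<Rightarrow> real \<Rightarrow> real \<Rightarrow> real^4^4" where
  "Qmat x1 x2 x3 \<gamma> \<delta> = vector [
     vector [1, \<delta> * x1, x2, x3],
     vector [1 / (\<delta> * x1), 1, x2 / x1, x3 / x1],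
     vector [1 / x2, x1 / x2, 1, \<gamma> * x3 / x2],
     vector [1 / x3, x1 / x3, x2 / (\<gamma> * x3), 1]]"

lemma Qmat_entries_sanity:
  "Qmat x1 x2 x3 \<gamma> \<delta> $ 1 $ 2 = \<delta> * x1"
  "Qmat x1 x2 x3 \<gamma> \<delta> $ 3 $ 4 = \<gamma> * x3 / x2"
  "Qmat x1 x2 x3 \<gamma> \<delta> $ 4 $ 3 = x2 / (\<gamma> * x3)"
  by (simp_all add: Qmat_def vector_def)

end

theory Submission
  imports Defs
begin

text \<open>Row 1 of \<open>Q\<close> agrees with \<open>\<delta> x\<^sub>1\<close> times row 2 except in columns 3 and 4, where it carries
  an extra factor \<open>1/\<delta>\<close>. For an eigenvector \<open>w\<close> with eigenvalue \<open>\<lambda>\<close> this gives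
  \<open>\<lambda> (w\<^sub>1 - \<delta> x\<^sub>1 w\<^sub>2) = (1 - \<delta>) (x\<^sub>2 w\<^sub>3 + x\<^sub>3 w\<^sub>4)\<close>, and since \<open>\<lambda>\<close> and \<open>w\<close> are positive, the sign
  of \<open>w\<^sub>1/w\<^sub>2 - \<delta> x\<^sub>1\<close> is the sign of \<open>1 - \<delta>\<close>.\<close>

lemma eigenvalue_pos_if_pos_matrix_pos_eigenvector:
  fixes A :: "real^'n^'n" and w :: "real^'n"
  assumes "\<And>i j. A$i$j > 0" and "\<And>i. w$i > 0" and "A *v w = l *s w"
  shows "l > 0"
proof -
  fix i :: 'n
  have "(A *v w)$i > 0"
    unfolding matrix_vector_mult_def using assms(1,2) by (simp add: sum_pos)
  then have "l * w$i > 0" using assms(3) by simp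
  then show ?thesis using assms(2)[of i] by (simp add: zero_less_mult_iff)
qed

lemma Qmat_entries_pos:
  assumes "x1 > 0" "x2 > 0" "x3 > 0" "\<gamma> > 0" "\<delta> > 0"
  shows "Qmat x1 x2 x3 \<gamma> \<delta> $ i $ j > 0"
  using assms exhaust_4[of i] exhaust_4[of j]
  by (auto simp: Qmat_def vector_def)

lemma Qmat_row1_minus_row2:
  assumes "x1 \<noteq> 0" "\<delta> \<noteq> 0"
  shows "(Qmat x1 x2 x3 \<gamma> \<delta> *v w)$1 - \<delta> * x1 * (Qmat x1 x2 x3 \<gamma> \<delta> *v w)$2
           = (1 - \<delta>) * (x2 * w$3 + x3 * w$4)"
  using assms
  by (simp add: Qmat_def matrix_vector_mult_def vector_def sum_4 field_simps)

lemma sign_eq_sign_of_scaled_eq: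
  fixes l d t \<delta> :: real
  assumes "l > 0" "t > 0" "l * d = (1 - \<delta>) * t"
  shows "d < 0 \<longleftrightarrow> \<delta> > 1" and "d > 0 \<longleftrightarrow> \<delta> < 1"
proof -
  have "d < 0 \<longleftrightarrow> l * d < 0" "d > 0 \<longleftrightarrow> l * d > 0"
    using assms(1) by (simp_all add: mult_less_0_iff zero_less_mult_iff)
  then show "d < 0 \<longleftrightarrow> \<delta> > 1" "d > 0 \<longleftrightarrow> \<delta> < 1"
    using assms(2,3) by (simp_all add: mult_less_0_iff zero_less_mult_iff)
qed

theorem mainTheorem11:
  fixes x1 x2 x3 \<gamma> \<delta> :: real and w :: "real^4"
  assumes "x1 > 0" "x2 > 0" "x3 > 0" "\<gamma> > 0" "\<delta> > 0" "\<gamma> \<noteq> 1" "\<delta> \<noteq> 1"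
    and "principal_right_eigenvector (Qmat x1 x2 x3 \<gamma> \<delta>) w"
  shows "(\<delta> > 1 \<longleftrightarrow> w$1 / w$2 < \<delta> * x1) \<and> (\<delta> < 1 \<longleftrightarrow> w$1 / w$2 > \<delta> * x1)"
proof -
  from assms(8) obtain l where w_pos: "\<And>i. w$i > 0"
    and eigen: "Qmat x1 x2 x3 \<gamma> \<delta> *v w = l *s w"
    unfolding principal_right_eigenvector_def by blast
  have l_pos: "l > 0"
    using eigenvalue_pos_if_pos_matrix_pos_eigenvector[OF Qmat_entries_pos w_pos eigen] assms
    by blast
  have tail_pos: "x2 * w$3 + x3 * w$4 > 0"
    using assms(2,3) w_pos by (simp add: add_pos_pos)
  have key: "l * (w$1 - \<delta> * x1 * w$2) = (1 - \<delta>) * (x2 * w$3 + x3 * w$4)"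
    using Qmat_row1_minus_row2[of x1 \<delta> x2 x3 \<gamma> w] assms(1,5) eigen
    by (simp add: algebra_simps)
  have "w$1 / w$2 < \<delta> * x1 \<longleftrightarrow> w$1 - \<delta> * x1 * w$2 < 0"
       "w$1 / w$2 > \<delta> * x1 \<longleftrightarrow> w$1 - \<delta> * x1 * w$2 > 0"
    using w_pos[of 2] by (simp_all add: divide_less_eq less_divide_eq)
  moreover have "w$1 - \<delta> * x1 * w$2 < 0 \<longleftrightarrow> \<delta> > 1"
                "w$1 - \<delta> * x1 * w$2 > 0 \<longleftrightarrow> \<delta> < 1"
    using sign_eq_sign_of_scaled_eq[OF l_pos tail_pos key] by simp_all
  ultimately show ?thesis by simp
qed

end
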